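(* Let $T$ be a doubled graph with good partition $(X,Y)$. (1) If $\{y\}$ is an anticomponent of size one of $T|Y$ and $y$ has an antineighbor $x\in X$, then $\{x,y\}$ is an even pair of $T$; in particular, if in addition $T|X$ has an edge $x_1x_2$, then one of $\{x_1,y\}$, $\{x_2,y\}$ is an even pair, so $T$ has an even pair. (2) If $T|Y$ has a strong antiedge $y_1y_2$ and $T|X$ has no edge, then $\{y_1,y_2\}$ is an even pair of $T$.
   Context: A trigraph $T$ consists of a finite set $V(T)$ and a map $\theta:\binom{V(T)}{2}\to\{-1,0,1\}$. Two distinct vertices $u,v$ are strongly adjacent if $\theta(uv)=1$, strongly antiadjacent if $\theta(uv)=-1$, and semiadjacent (a switchable pair) if $\theta(uv)=0$; they are adjacent if $\theta(uv)\in\{0,1\}$ and antiadjacent if $\theta(uv)\in\{0,-1\}$; an antineighbor of $v$ is a vertex antiadjacent to $v$. An edge (antiedge) is an adjacent (antiadjacent) pair; a strong edge (strong antiedge) is a strongly adjacent (strongly antiadjacent) pair. For $X\subseteq V(T)$, $T|X$ is the trigraph on $X$ with $\theta$ restricted. A set $X$ is connected if the graph on $X$ whose edges are the adjacent pairs is connected, and anticonnected if the graph on $X$ whose edges are the antiadjacent pairs is connected; components (anticomponents) are maximal connected (anticonnected) subsets. A path is a sequence of distinct vertices $p_1,\dots,p_k$ such that $p_i,p_j$ are adjacent when $|i-j|=1$ and antiadjacent when $|i-j|>1$; its length is $k-1$. An even pair of $T$ is a strongly antiadjacent pair $\{u,v\}$ such that every path from $u$ to $v$ in $T$ has even length. A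 good partition of $T$ is a partition $(X,Y)$ of $V(T)$ such that every component of $T|X$ and every anticomponent of $T|Y$ has at most two vertices, no switchable pair has one end in $X$ and the other in $Y$, and for every component $C_x$ of $T|X$ and every anticomponent $C_y$ of $T|Y$, every vertex of $C_x\cup C_y$ is incident with at most one strong edge and at most one strong antiedge between $C_x$ and $C_y$. $T$ is a doubled graph if it has a good partition. *)

theory Defs
  imports Main
begin

definition trigraph :: "'a set \<Rightarrow> ('a \<Rightarrow> 'a \<Rightarrow> int) \<Rightarrow> bool" where
  "trigraph V \<theta> \<longleftrightarrow> finite V \<and>
     (\<forall>u\<in>V. \<forall>v\<in>V. u \<noteq> v \<longrightarrow> \<theta> u v = \<theta> v u \<and> \<theta> u v \<in> {-1, 0, 1})"

definition strongly_adjacent :: "('a \<Rightarrow> 'a \<Rightarrow> int) \<Rightarrow> 'a \<Rightarrow> 'a \<Rightarrow> bool" where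
  "strongly_adjacent \<theta> u v \<longleftrightarrow> u \<noteq> v \<and> \<theta> u v = 1"

definition strongly_antiadjacent :: "('a \<Rightarrow> 'a \<Rightarrow> int) \<Rightarrow> 'a \<Rightarrow> 'a \<Rightarrow> bool" where
  "strongly_antiadjacent \<theta> u v \<longleftrightarrow> u \<noteq> v \<and> \<theta> u v = -1"

definition semiadjacent :: "('a \<Rightarrow> 'a \<Rightarrow> int) \<Rightarrow> 'a \<Rightarrow> 'a \<Rightarrow> bool" where
  "semiadjacent \<theta> u v \<longleftrightarrow> u \<noteq> v \<and> \<theta> u v = 0"

definition adjacent :: "('a \<Rightarrow> 'a \<Rightarrow> int) \<Rightarrow> 'a \<Rightarrow> 'a \<Rightarrow> bool" where
  "adjacent \<theta> u v \<longleftrightarrow> u \<noteq> v \<and> \<theta> u v \<in> {0, 1}"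

definition antiadjacent :: "('a \<Rightarrow> 'a \<Rightarrow> int) \<Rightarrow> 'a \<Rightarrow> 'a \<Rightarrow> bool" where
  "antiadjacent \<theta> u v \<longleftrightarrow> u \<noteq> v \<and> \<theta> u v \<in> {0, -1}"

definition connected_wrt :: "('a \<Rightarrow> 'a \<Rightarrow> bool) \<Rightarrow> 'a set \<Rightarrow> bool" where
  "connected_wrt R X \<longleftrightarrow>
     (\<forall>u\<in>X. \<forall>v\<in>X. (\<lambda>a b. a \<in> X \<and> b \<in> X \<and> R a b)\<^sup>*\<^sup>* u v)"

definition component_wrt :: "('a \<Rightarrow> 'a \<Rightarrow> bool) \<Rightarrow> 'a set \<Rightarrow> 'a set \<Rightarrow> bool" where
  "component_wrt R X C \<longleftrightarrow> C \<noteq> {} \<and> C \<subseteq> X \<and> connected_wrt R C \<and>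
     (\<forall>C'. C \<subseteq> C' \<and> C' \<subseteq> X \<and> connected_wrt R C' \<longrightarrow> C' = C)"

definition component :: "('a \<Rightarrow> 'a \<Rightarrow> int) \<Rightarrow> 'a set \<Rightarrow> 'a set \<Rightarrow> bool" where
  "component \<theta> X C \<longleftrightarrow> component_wrt (adjacent \<theta>) X C"

definition anticomponent :: "('a \<Rightarrow> 'a \<Rightarrow> int) \<Rightarrow> 'a set \<Rightarrow> 'a set \<Rightarrow> bool" where
  "anticomponent \<theta> X C \<longleftrightarrow> component_wrt (antiadjacent \<theta>) X C"

definition is_path :: "'a set \<Rightarrow> ('a \<Rightarrow> 'a \<Rightarrow> int) \<Rightarrow> 'a list \<Rightarrow> bool" where
  "is_path V \<theta> ps \<longleftrightarrow> ps \<noteq> [] \<and> distinct ps \<and> set ps \<subseteq> V \<and>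
     (\<forall>i j. i < length ps \<and> j < length ps \<longrightarrow>
        ((i + 1 = j \<or> j + 1 = i) \<longrightarrow> adjacent \<theta> (ps ! i) (ps ! j)) \<and>
        ((i + 1 < j \<or> j + 1 < i) \<longrightarrow> antiadjacent \<theta> (ps ! i) (ps ! j)))"

definition even_pair :: "'a set \<Rightarrow> ('a \<Rightarrow> 'a \<Rightarrow> int) \<Rightarrow> 'a \<Rightarrow> 'a \<Rightarrow> bool" where
  "even_pair V \<theta> u v \<longleftrightarrow> u \<in> V \<and> v \<in> V \<and> strongly_antiadjacent \<theta> u v \<and>
     (\<forall>ps. is_path V \<theta> ps \<and> hd ps = u \<and> last ps = v \<longrightarrow> even (length ps - 1))"

definition good_partition :: "'a set \<Rightarrow> ('a \<Rightarrow> 'a \<Rightarrow> int) \<Rightarrow> 'a set \<Rightarrow> 'a set \<Rightarrow> bool" where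
  "good_partition V \<theta> X Y \<longleftrightarrow>
     X \<inter> Y = {} \<and> X \<union> Y = V \<and>
     (\<forall>C. component \<theta> X C \<longrightarrow> card C \<le> 2) \<and>
     (\<forall>C. anticomponent \<theta> Y C \<longrightarrow> card C \<le> 2) \<and>
     (\<forall>x\<in>X. \<forall>y\<in>Y. \<not> semiadjacent \<theta> x y) \<and>
     (\<forall>Cx Cy. component \<theta> X Cx \<and> anticomponent \<theta> Y Cy \<longrightarrow>
        (\<forall>w\<in>Cx \<union> Cy.
           card {z \<in> Cx \<union> Cy. ((w \<in> Cx \<and> z \<in> Cy) \<or> (w \<in> Cy \<and> z \<in> Cx)) \<and>
                                strongly_adjacent \<theta> w z} \<le> 1 \<and>
           card {z \<in> Cx \<union> Cy. ((w \<in> Cx \<and> z \<in> Cy) \<or> (w \<in> Cy \<and> z \<in> Cx)) \<and>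
                                strongly_antiadjacent \<theta> w z} \<le> 1))"

definition doubled_graph :: "'a set \<Rightarrow> ('a \<Rightarrow> 'a \<Rightarrow> int) \<Rightarrow> bool" where
  "doubled_graph V \<theta> \<longleftrightarrow> trigraph V \<theta> \<and> (\<exists>X Y. good_partition V \<theta> X Y)"

end

theory Submission imports Defs begin

text \<open>Every path of length at least 3 from u to v begins with an induced path u-b-c whose
  second vertex b is antiadjacent to v. For (1), b cannot lie in Y, since the singleton
  anticomponent {y} is strongly adjacent to the rest of Y; so u b is an edge of T|X whose ends are
  both strongly antiadjacent to y, against the good-partition condition on the component of u b and
  the anticomponent {y}. The same condition forces y to be strongly antiadjacent to one end of every
  edge of T|X, which gives the second statement of (1). For (2), b or c in Y would create an
  anticonnected triple in T|Y, and b, c in X an edge of T|X. Hence all such paths have length 2.\<close>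

lemma component_wrt_reachable:
  assumes sym: "\<And>u v. u \<in> X \<Longrightarrow> v \<in> X \<Longrightarrow> R u v \<Longrightarrow> R v u" and a: "a \<in> X"
  shows "component_wrt R X {v. (\<lambda>u w. u \<in> X \<and> w \<in> X \<and> R u w)\<^sup>*\<^sup>* a v}"
    (is "component_wrt R X ?C")
proof -
  let ?r = "\<lambda>u w. u \<in> X \<and> w \<in> X \<and> R u w"
  let ?s = "\<lambda>u w. u \<in> ?C \<and> w \<in> ?C \<and> R u w"
  have C_sub: "?C \<subseteq> X"
  proof
    fix v assume "v \<in> ?C"
    then have "?r\<^sup>*\<^sup>* a v" by simp
    then show "v \<in> X" by (induction rule: rtranclp_induct) (auto simp: a)
  qed
  have from_a: "?s\<^sup>*\<^sup>* a v" if "?r\<^sup>*\<^sup>* a v" for v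
    using that
  proof (induction rule: rtranclp_induct)
    case (step w v)
    then have "?s w v" by (simp add: rtranclp.rtrancl_into_rtrancl)
    with step.IH show ?case by (rule rtranclp.rtrancl_into_rtrancl)
  qed simp
  have s_sym: "?s\<^sup>*\<^sup>* v u" if "?s\<^sup>*\<^sup>* u v" for u v
    using that
  proof (induction rule: rtranclp_induct)
    case (step w z)
    then have "?s z w" using C_sub sym by blast
    then show ?case using step.IH by (rule converse_rtranclp_into_rtranclp)
  qed simp
  have "connected_wrt R ?C"
    unfolding connected_wrt_def
    using from_a s_sym by (blast intro: rtranclp_trans)
  moreover have "C' = ?C" if "?C \<subseteq> C'" "C' \<subseteq> X" "connected_wrt R C'" for C'
  proof -
    have "?r\<^sup>*\<^sup>* a v" if "v \<in> C'" for v
    proof -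
      have "(\<lambda>u w. u \<in> C' \<and> w \<in> C' \<and> R u w)\<^sup>*\<^sup>* a v"
        using \<open>?C \<subseteq> C'\<close> \<open>connected_wrt R C'\<close> \<open>v \<in> C'\<close> unfolding connected_wrt_def by blast
      then show ?thesis
        by (rule rtranclp_mono[THEN predicate2D, rotated]) (use \<open>C' \<subseteq> X\<close> in auto)
    qed
    then show ?thesis using \<open>?C \<subseteq> C'\<close> by blast
  qed
  ultimately show ?thesis
    unfolding component_wrt_def using C_sub by auto
qed

lemma component_wrt_containing:
  assumes "\<And>u v. u \<in> X \<Longrightarrow> v \<in> X \<Longrightarrow> R u v \<Longrightarrow> R v u" and "a \<in> X"
  obtains C where "component_wrt R X C" "a \<in> C"
    "\<And>v. (\<lambda>u w. u \<in> X \<and> w \<in> X \<and> R u w)\<^sup>*\<^sup>* a v \<Longrightarrow> v \<in> C"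
  by (rule that[OF component_wrt_reachable[OF assms]]) simp_all

lemma component_wrt_no_chain_of_three:
  assumes sym: "\<And>u v. u \<in> X \<Longrightarrow> v \<in> X \<Longrightarrow> R u v \<Longrightarrow> R v u" and "finite X"
    and small: "\<And>C. component_wrt R X C \<Longrightarrow> card C \<le> 2"
    and in_X: "a \<in> X" "b \<in> X" "c \<in> X" and "distinct [a, b, c]"
    and "R a b" "R b c"
  shows False
proof -
  obtain C where C: "component_wrt R X C"
    and reach: "\<And>v. (\<lambda>u w. u \<in> X \<and> w \<in> X \<and> R u w)\<^sup>*\<^sup>* a v \<Longrightarrow> v \<in> C"
    using component_wrt_containing[of X R a, OF sym \<open>a \<in> X\<close>] by blast
  let ?r = "\<lambda>u w. u \<in> X \<and> w \<in> X \<and> R u w"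
  have "?r\<^sup>*\<^sup>* a b" using in_X \<open>R a b\<close> by (simp add: r_into_rtranclp)
  moreover from this have "?r\<^sup>*\<^sup>* a c"
    using in_X \<open>R b c\<close> by (simp add: rtranclp.rtrancl_into_rtrancl)
  ultimately have "{a, b, c} \<subseteq> C"
    using reach C unfolding component_wrt_def by blast
  moreover have "finite C"
    using C \<open>finite X\<close> unfolding component_wrt_def by (blast intro: finite_subset)
  ultimately have "card {a, b, c} \<le> card C" by (rule card_mono[rotated])
  with small[OF C] \<open>distinct [a, b, c]\<close> show False by simp
qed

lemma even_pairI:
  assumes "u \<in> V" "v \<in> V" and uv: "strongly_antiadjacent \<theta> u v"
    and no_long_path: "\<And>b c. b \<in> V \<Longrightarrow> c \<in> V \<Longrightarrow> distinct [u, b, c, v] \<Longrightarrow>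
      adjacent \<theta> u b \<Longrightarrow> adjacent \<theta> b c \<Longrightarrow> antiadjacent \<theta> u c \<Longrightarrow> antiadjacent \<theta> b v \<Longrightarrow> False"
  shows "even_pair V \<theta> u v"
  unfolding even_pair_def
proof (intro conjI allI impI)
  fix ps assume "is_path V \<theta> ps \<and> hd ps = u \<and> last ps = v"
  then have path: "is_path V \<theta> ps" and first: "ps ! 0 = u" and final: "ps ! (length ps - 1) = v"
    by (auto simp: is_path_def hd_conv_nth last_conv_nth)
  define n where "n = length ps"
  have adj: "\<And>i. i + 1 < n \<Longrightarrow> adjacent \<theta> (ps ! i) (ps ! (i + 1))"
    and anti: "\<And>i j. i + 1 < j \<Longrightarrow> j < n \<Longrightarrow> antiadjacent \<theta> (ps ! i) (ps ! j)"
    and "distinct ps" "set ps \<subseteq> V" "n > 0"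
    using path unfolding is_path_def n_def by auto
  have "u \<noteq> v" "\<not> adjacent \<theta> u v"
    using uv unfolding strongly_antiadjacent_def adjacent_def by auto
  then have "n \<noteq> 1" "n \<noteq> 2"
    using first final adj[of 0] unfolding n_def by auto
  moreover have "\<not> n \<ge> 4"
  proof
    assume "n \<ge> 4"
    have "distinct [ps ! 0, ps ! 1, ps ! 2, ps ! (n - 1)]"
      using \<open>distinct ps\<close> \<open>n \<ge> 4\<close>
      by (auto simp: n_def nth_eq_iff_index_eq simp del: length_greater_0_conv)
    then have "distinct [u, ps ! 1, ps ! 2, v]"
      using first final by (simp add: n_def)
    moreover have "ps ! 1 \<in> V" "ps ! 2 \<in> V"
      using \<open>set ps \<subseteq> V\<close> \<open>n \<ge> 4\<close> unfolding n_def by auto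
    moreover have "adjacent \<theta> u (ps ! 1)" "adjacent \<theta> (ps ! 1) (ps ! 2)"
      using adj[of 0] adj[of 1] first \<open>n \<ge> 4\<close> by (simp_all add: numeral_2_eq_2)
    moreover have "antiadjacent \<theta> u (ps ! 2)" "antiadjacent \<theta> (ps ! 1) v"
      using anti[of 0 2] anti[of 1 "n - 1"] first final \<open>n \<ge> 4\<close> unfolding n_def by simp_all
    ultimately show False using no_long_path by blast
  qed
  ultimately show "even (length ps - 1)"
    using \<open>n > 0\<close> unfolding n_def by presburger
qed (use assms in auto)

lemma trigraph_adjacent_sym:
  "trigraph V \<theta> \<Longrightarrow> u \<in> V \<Longrightarrow> v \<in> V \<Longrightarrow> adjacent \<theta> u v \<Longrightarrow> adjacent \<theta> v u"
  unfolding trigraph_def adjacent_def by auto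

lemma trigraph_antiadjacent_sym:
  "trigraph V \<theta> \<Longrightarrow> u \<in> V \<Longrightarrow> v \<in> V \<Longrightarrow> antiadjacent \<theta> u v \<Longrightarrow> antiadjacent \<theta> v u"
  unfolding trigraph_def antiadjacent_def by auto

locale good_partitioned_trigraph =
  fixes V :: "'a set" and \<theta> :: "'a \<Rightarrow> 'a \<Rightarrow> int" and X Y :: "'a set"
  assumes trigraph: "trigraph V \<theta>" and good: "good_partition V \<theta> X Y"
begin

lemma X_Y_disjoint: "X \<inter> Y = {}" and V_eq: "V = X \<union> Y"
  using good unfolding good_partition_def by auto

lemma X_subset: "X \<subseteq> V" and Y_subset: "Y \<subseteq> V"
  using V_eq by auto

lemma finite_V: "finite V"
  using trigraph unfolding trigraph_def by blast

lemma theta_sym: "u \<in> V \<Longrightarrow> v \<in> V \<Longrightarrow> u \<noteq> v \<Longrightarrow> \<theta> u v = \<theta> v u"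
  using trigraph unfolding trigraph_def by blast

lemma theta_X_Y: assumes "x \<in> X" "y \<in> Y" shows "\<theta> y x = -1 \<or> \<theta> y x = 1"
proof -
  have "x \<noteq> y" "x \<in> V" "y \<in> V"
    using assms X_Y_disjoint V_eq by auto
  then have "\<theta> y x \<in> {-1, 0, 1}" "\<theta> x y = \<theta> y x"
    using trigraph unfolding trigraph_def by auto
  moreover have "\<not> semiadjacent \<theta> x y"
    using good assms unfolding good_partition_def by blast
  ultimately show ?thesis
    using \<open>x \<noteq> y\<close> unfolding semiadjacent_def by auto
qed

lemma antiadjacent_X_Y_iff:
  assumes "x \<in> X" "y \<in> Y" shows "antiadjacent \<theta> x y \<longleftrightarrow> \<theta> y x = -1"
proof -
  have "x \<in> V" "y \<in> V" "x \<noteq> y"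
    using assms X_Y_disjoint V_eq by auto
  then show ?thesis
    using theta_X_Y[OF assms] theta_sym[of x y] unfolding antiadjacent_def by auto
qed

lemma anticomponent_singleton_in_Y: "anticomponent \<theta> Y {y} \<Longrightarrow> y \<in> Y"
  unfolding anticomponent_def component_wrt_def by blast

lemma anticomponent_singleton_strongly_adjacent:
  assumes y: "anticomponent \<theta> Y {y}" and w: "w \<in> Y" "w \<noteq> y"
  shows "\<theta> y w = 1"
proof (rule ccontr)
  assume "\<theta> y w \<noteq> 1"
  have "y \<in> Y" using anticomponent_singleton_in_Y[OF y] .
  then have "y \<in> V" "w \<in> V" using w Y_subset by auto
  then have "antiadjacent \<theta> y w"
    using \<open>\<theta> y w \<noteq> 1\<close> trigraph w unfolding trigraph_def antiadjacent_def by auto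
  moreover from this have "antiadjacent \<theta> w y"
    using trigraph_antiadjacent_sym[OF trigraph] \<open>y \<in> V\<close> \<open>w \<in> V\<close> by blast
  ultimately have "connected_wrt (antiadjacent \<theta>) {y, w}"
    unfolding connected_wrt_def by (auto intro: r_into_rtranclp)
  with y \<open>y \<in> Y\<close> w have "{y, w} = {y}"
    unfolding anticomponent_def component_wrt_def
    by (metis empty_subsetI insert_mono insert_subset subset_insertI)
  with w show False by blast
qed

lemma anticomponent_singleton_splits_edge:
  assumes y: "anticomponent \<theta> Y {y}" and ab: "a \<in> X" "b \<in> X" "adjacent \<theta> a b"
  shows "\<theta> y a \<noteq> \<theta> y b"
proof
  assume same: "\<theta> y a = \<theta> y b"
  have "\<And>u v. u \<in> X \<Longrightarrow> v \<in> X \<Longrightarrow> adjacent \<theta> u v \<Longrightarrow> adjacent \<theta> v u"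
    using trigraph_adjacent_sym[OF trigraph] X_subset by blast
  then obtain C where C: "component \<theta> X C" and "a \<in> C"
    and reach: "\<And>v. (\<lambda>u w. u \<in> X \<and> w \<in> X \<and> adjacent \<theta> u w)\<^sup>*\<^sup>* a v \<Longrightarrow> v \<in> C"
    using component_wrt_containing[of X "adjacent \<theta>" a] \<open>a \<in> X\<close> unfolding component_def by blast
  have "b \<in> C" by (rule reach, rule r_into_rtranclp) (use ab in simp)
  have "y \<in> Y" using anticomponent_singleton_in_Y[OF y] .
  have "C \<subseteq> X" using C unfolding component_def component_wrt_def by blast
  then have "finite (C \<union> {y})"
    using finite_V X_subset by (auto intro: finite_subset)
  have "y \<noteq> a" "y \<noteq> b" "a \<noteq> b"
    using ab \<open>y \<in> Y\<close> X_Y_disjoint unfolding adjacent_def by auto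
  have "y \<in> C \<union> {y}" by simp
  then have bounds:
    "card {z \<in> C \<union> {y}. ((y \<in> C \<and> z \<in> {y}) \<or> (y \<in> {y} \<and> z \<in> C)) \<and> strongly_adjacent \<theta> y z} \<le> 1"
    "card {z \<in> C \<union> {y}. ((y \<in> C \<and> z \<in> {y}) \<or> (y \<in> {y} \<and> z \<in> C)) \<and> strongly_antiadjacent \<theta> y z} \<le> 1"
    using good C y unfolding good_partition_def by blast+
  have two_strong: False
    if "card {z \<in> C \<union> {y}. ((y \<in> C \<and> z \<in> {y}) \<or> (y \<in> {y} \<and> z \<in> C)) \<and> S y z} \<le> 1"
      and "S y a" "S y b" for S
  proof -
    let ?S = "{z \<in> C \<union> {y}. ((y \<in> C \<and> z \<in> {y}) \<or> (y \<in> {y} \<and> z \<in> C)) \<and> S y z}"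
    have "{a, b} \<subseteq> ?S" using \<open>a \<in> C\<close> \<open>b \<in> C\<close> that by blast
    moreover have "finite ?S" using \<open>finite (C \<union> {y})\<close> by simp
    ultimately have "card {a, b} \<le> card ?S" by (rule card_mono[rotated])
    with that(1) \<open>a \<noteq> b\<close> show False by simp
  qed
  consider "\<theta> y a = -1" | "\<theta> y a = 1" using theta_X_Y \<open>a \<in> X\<close> \<open>y \<in> Y\<close> by blast
  then show False
  proof cases
    case 1
    then show False using two_strong[of "strongly_antiadjacent \<theta>", OF bounds(2)] same \<open>y \<noteq> a\<close> \<open>y \<noteq> b\<close>
      unfolding strongly_antiadjacent_def by simp
  next
    case 2
    then show False using two_strong[of "strongly_adjacent \<theta>", OF bounds(1)] same \<open>y \<noteq> a\<close> \<open>y \<noteq> b\<close>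
      unfolding strongly_adjacent_def by simp
  qed
qed

lemma no_antiadjacent_chain_in_Y:
  assumes "a \<in> Y" "b \<in> Y" "c \<in> Y" "distinct [a, b, c]"
    and "antiadjacent \<theta> a b" "antiadjacent \<theta> b c"
  shows False
proof (rule component_wrt_no_chain_of_three[of Y "antiadjacent \<theta>" a b c])
  show "finite Y" using finite_V Y_subset by (rule finite_subset[rotated])
  show "card C \<le> 2" if "component_wrt (antiadjacent \<theta>) Y C" for C
    using good that unfolding good_partition_def anticomponent_def by blast
qed (use assms trigraph_antiadjacent_sym[OF trigraph] Y_subset in auto)

lemma even_pair_singleton_anticomponent:
  assumes y: "anticomponent \<theta> Y {y}" and "x \<in> X" and "antiadjacent \<theta> x y"
  shows "even_pair V \<theta> x y"
proof -
  have "y \<in> Y" using anticomponent_singleton_in_Y[OF y] .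
  have xy: "\<theta> y x = -1" using antiadjacent_X_Y_iff \<open>x \<in> X\<close> \<open>y \<in> Y\<close> assms(3) by blast
  show ?thesis
  proof (rule even_pairI)
    show "strongly_antiadjacent \<theta> x y"
      using xy theta_sym[of x y] \<open>x \<in> X\<close> \<open>y \<in> Y\<close> X_Y_disjoint V_eq
      unfolding strongly_antiadjacent_def by auto
    fix b c assume "b \<in> V" "distinct [x, b, c, y]" "adjacent \<theta> x b" "antiadjacent \<theta> b y"
    have "b \<notin> Y"
      using anticomponent_singleton_strongly_adjacent[OF y] \<open>antiadjacent \<theta> b y\<close>
        \<open>distinct [x, b, c, y]\<close> theta_sym[of b y] \<open>y \<in> Y\<close> Y_subset
      unfolding antiadjacent_def by force
    then have "b \<in> X" using \<open>b \<in> V\<close> V_eq by blast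
    then have "\<theta> y b = -1" using antiadjacent_X_Y_iff \<open>y \<in> Y\<close> \<open>antiadjacent \<theta> b y\<close> by blast
    with xy anticomponent_singleton_splits_edge[OF y \<open>x \<in> X\<close> \<open>b \<in> X\<close> \<open>adjacent \<theta> x b\<close>]
    show False by simp
  qed (use \<open>x \<in> X\<close> \<open>y \<in> Y\<close> X_subset Y_subset in auto)
qed

lemma even_pair_at_edge_of_X:
  assumes y: "anticomponent \<theta> Y {y}" and "x1 \<in> X" "x2 \<in> X" "adjacent \<theta> x1 x2"
  shows "even_pair V \<theta> x1 y \<or> even_pair V \<theta> x2 y"
proof -
  have "y \<in> Y" using anticomponent_singleton_in_Y[OF y] .
  have "\<theta> y x1 = -1 \<or> \<theta> y x2 = -1"
    using anticomponent_singleton_splits_edge[OF assms] theta_X_Y[OF assms(2) \<open>y \<in> Y\<close>]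
      theta_X_Y[OF assms(3) \<open>y \<in> Y\<close>] by auto
  then show ?thesis
    using even_pair_singleton_anticomponent[OF y] antiadjacent_X_Y_iff assms(2,3) \<open>y \<in> Y\<close> by blast
qed

lemma even_pair_Y_if_X_stable:
  assumes "y1 \<in> Y" "y2 \<in> Y" "strongly_antiadjacent \<theta> y1 y2"
    and stable: "\<forall>a\<in>X. \<forall>b\<in>X. \<not> adjacent \<theta> a b"
  shows "even_pair V \<theta> y1 y2"
proof (rule even_pairI)
  have y12: "antiadjacent \<theta> y1 y2"
    using assms(3) unfolding strongly_antiadjacent_def antiadjacent_def by simp
  then have y21: "antiadjacent \<theta> y2 y1"
    using trigraph_antiadjacent_sym[OF trigraph] assms(1,2) Y_subset by blast
  fix b c assume "b \<in> V" "c \<in> V" "distinct [y1, b, c, y2]" "adjacent \<theta> b c"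
    "antiadjacent \<theta> y1 c" "antiadjacent \<theta> b y2"
  show False
  proof (cases "b \<in> Y")
    case True
    then show False
      using no_antiadjacent_chain_in_Y[of b y2 y1] assms(1,2) \<open>distinct [y1, b, c, y2]\<close>
        \<open>antiadjacent \<theta> b y2\<close> y21 by auto
  next
    case False
    show False
    proof (cases "c \<in> Y")
      case True
      have "antiadjacent \<theta> c y1"
        using trigraph_antiadjacent_sym[OF trigraph] \<open>antiadjacent \<theta> y1 c\<close> \<open>c \<in> V\<close> assms(1)
          Y_subset by blast
      then show False
        using no_antiadjacent_chain_in_Y[of c y1 y2] True assms(1,2)
          \<open>distinct [y1, b, c, y2]\<close> y12 by auto
    next
      case False
      then show False
        using \<open>b \<notin> Y\<close> \<open>b \<in> V\<close> \<open>c \<in> V\<close> V_eq stable \<open>adjacent \<theta> b c\<close> by blast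
    qed
  qed
qed (use assms Y_subset in auto)

end

theorem proposition4p10:
  fixes V :: "'a set" and \<theta> :: "'a \<Rightarrow> 'a \<Rightarrow> int" and X Y :: "'a set"
  assumes "doubled_graph V \<theta>"
    and "good_partition V \<theta> X Y"
  shows "(\<forall>x y. anticomponent \<theta> Y {y} \<and> x \<in> X \<and> antiadjacent \<theta> x y
              \<longrightarrow> even_pair V \<theta> x y)
       \<and> (\<forall>x1 x2 y. anticomponent \<theta> Y {y} \<and> x1 \<in> X \<and> x2 \<in> X \<and> adjacent \<theta> x1 x2
              \<longrightarrow> (even_pair V \<theta> x1 y \<or> even_pair V \<theta> x2 y) \<and>
                  (\<exists>u v. even_pair V \<theta> u v))
       \<and> (\<forall>y1 y2. y1 \<in> Y \<and> y2 \<in> Y \<and> strongly_antiadjacent \<theta> y1 y2 \<and>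
                 (\<forall>a\<in>X. \<forall>b\<in>X. \<not> adjacent \<theta> a b)
              \<longrightarrow> even_pair V \<theta> y1 y2)"
proof -
  interpret good_partitioned_trigraph V \<theta> X Y
    using assms by unfold_locales (simp_all add: doubled_graph_def)
  show ?thesis
    using even_pair_singleton_anticomponent even_pair_at_edge_of_X even_pair_Y_if_X_stable by blast
qed

end
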